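(* Let $(Q,\cdot)$ be a Ward quasigroup with $xx=e$ for all $x\in Q$, and let $(Q,\ast)$ be a magma having a unique left unit $l$. If $(Q,\cdot,\ast)$ is a double magma, i.e. $(x\cdot y)\ast(z\cdot w)=(x\ast z)\cdot(y\ast w)$ for all $x,y,z,w\in Q$, then $l=e$.
   Context: A Ward quasigroup is a quasigroup $(Q,\cdot)$ (a magma in which $ax=b$ and $ya=b$ have unique solutions for all $a,b$) satisfying $(xz)(yz)=xy$ for all $x,y,z$; in it there is an element $e$ with $xx=e$ for all $x$. A left unit of $(Q,\ast)$ is an element $l$ with $l\ast x=x$ for all $x$. *)

theory Defs
  imports Main
begin

definition quasigroup :: "('a \<Rightarrow> 'a \<Rightarrow> 'a) \<Rightarrow> bool" where
  "quasigroup m \<longleftrightarrow> (\<forall>a b. \<exists>!x. m a x = b) \<and> (\<forall>a b. \<exists>!y. m y a = b)"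

definition ward_quasigroup :: "('a \<Rightarrow> 'a \<Rightarrow> 'a) \<Rightarrow> bool" where
  "ward_quasigroup m \<longleftrightarrow> quasigroup m \<and> (\<forall>x y z. m (m x z) (m y z) = m x y)"

definition left_unit :: "('a \<Rightarrow> 'a \<Rightarrow> 'a) \<Rightarrow> 'a \<Rightarrow> bool" where
  "left_unit m l \<longleftrightarrow> (\<forall>x. m l x = x)"

definition double_magma :: "('a \<Rightarrow> 'a \<Rightarrow> 'a) \<Rightarrow> ('a \<Rightarrow> 'a \<Rightarrow> 'a) \<Rightarrow> bool" where
  "double_magma m s \<longleftrightarrow> (\<forall>x y z w. s (m x y) (m z w) = m (s x z) (s y w))"

end

theory Submission
  imports Defs
begin

text \<open>Interchange turns \<open>(l \<cdot> l) \<ast> (l \<cdot> w)\<close> into \<open>(l \<ast> l) \<cdot> (l \<ast> w) = l \<cdot> w\<close>;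
  as \<open>l \<cdot> w\<close> ranges over all of \<open>Q\<close>, \<open>l \<cdot> l = e\<close> is a left unit of \<open>\<ast>\<close>,
  and uniqueness gives \<open>l = e\<close>.\<close>

lemma quasigroup_left_solvable:
  assumes "quasigroup m"
  obtains x where "m a x = b"
  using assms unfolding quasigroup_def by blast

lemma double_magma_left_unit_square:
  assumes "double_magma m s" and "left_unit s l" and "\<And>b. \<exists>w. m l w = b"
  shows "left_unit s (m l l)"
  unfolding left_unit_def
proof
  fix b
  obtain w where w: "m l w = b"
    using assms(3) by blast
  have "s (m l l) (m l w) = m (s l l) (s l w)"
    using assms(1) unfolding double_magma_def by blast
  also have "\<dots> = m l w"
    using assms(2) unfolding left_unit_def by simp
  finally show "s (m l l) b = b"
    using w by simp
qed

theorem proposition2p5: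
  fixes dot star :: "'a \<Rightarrow> 'a \<Rightarrow> 'a" and e l :: 'a
  assumes "ward_quasigroup dot"
    and "\<forall>x. dot x x = e"
    and "left_unit star l"
    and "\<forall>l'. left_unit star l' \<longrightarrow> l' = l"
    and "double_magma dot star"
  shows "l = e"
proof -
  have "quasigroup dot"
    using assms(1) unfolding ward_quasigroup_def by blast
  then have "left_unit star (dot l l)"
    using double_magma_left_unit_square[OF assms(5) assms(3)]
    by (metis quasigroup_left_solvable)
  then show ?thesis
    using assms(2,4) by simp
qed

end
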